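(* Let $A\in\mathbb Z_{\ge0}^{m\times m}$, $B\in\mathbb Z_{\ge0}^{n\times n}$, $C\in\mathbb Z_{\ge0}^{p\times p}$ and nonnegative integer matrices $R_1,S_1,R_2,S_2,R_3,S_3$ of compatible sizes with $A=R_1S_1$, $B=S_1R_1$, $B=R_2S_2$, $C=S_2R_2$, $A=R_3S_3$, $C=S_3R_3$, satisfying the triangle equations $R_1R_2=R_3$, $R_2S_3=S_1$, $S_3R_1=S_2$. Then the restricted matrices also form such a triangle: with $A'=A_{J_A\times J_A}$, $B'=B_{J_B\times J_B}$, $C'=C_{J_C\times J_C}$, $R_1'=(R_1)_{J_A\times J_B}$, $S_1'=(S_1)_{J_B\times J_A}$, $R_2'=(R_2)_{J_B\times J_C}$, $S_2'=(S_2)_{J_C\times J_B}$, $R_3'=(R_3)_{J_A\times J_C}$, $S_3'=(S_3)_{J_C\times J_A}$ we have $A'=R_1'S_1'$, $B'=S_1'R_1'$, $B'=R_2'S_2'$, $C'=S_2'R_2'$, $A'=R_3'S_3'$, $C'=S_3'R_3'$ and $R_1'R_2'=R_3'$, $R_2'S_3'=S_1'$, $S_3'R_1'=S_2'$.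
   Context: For a matrix $M$ and index sets $K,L$, $M_{K\times L}$ is the submatrix with rows in $K$ and columns in $L$. For a square matrix $A\in\mathbb Z_{\ge0}^{m\times m}$, $J_A\subseteq\{1,\dots,m\}$ is the set of indices $i$ such that for every $k\ge1$ the $i$-th row and the $i$-th column of $A^k$ are nonzero (the indices occurring in bi-infinite paths of the graph with adjacency matrix $A$). *)

theory Defs
  imports "Jordan_Normal_Form.Matrix" "Jordan_Normal_Form.DL_Submatrix"
begin

definition biinf_indices :: "nat mat \<Rightarrow> nat set" where
  "biinf_indices A = {i. i < dim_row A \<and>
     (\<forall>k::nat. k \<ge> 1 \<longrightarrow>
        (\<exists>j < dim_col A. (A ^\<^sub>m k) $$ (i, j) \<noteq> 0) \<and>
        (\<exists>j < dim_row A. (A ^\<^sub>m k) $$ (j, i) \<noteq> 0))}"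

end

theory Submission
  imports Defs
begin

text \<open>If \<open>U X = X V\<close>, then \<open>U\<^sup>s X = X V\<^sup>s\<close>, and since all entries are nonnegative, a nonzero
  entry \<open>X\<^sub>i\<^sub>j\<close> with \<open>i \<in> J\<^sub>U\<close> forces column \<open>j\<close> of every \<open>V\<^sup>s\<close> to be nonzero; dually, \<open>V Y = Y W\<close>
  and a nonzero \<open>Y\<^sub>j\<^sub>k\<close> with \<open>k \<in> J\<^sub>W\<close> force row \<open>j\<close> of every \<open>V\<^sup>s\<close> to be nonzero. Hence every
  index \<open>j\<close> contributing to an entry \<open>(X Y)\<^sub>i\<^sub>k\<close> with \<open>i \<in> J\<^sub>U\<close>, \<open>k \<in> J\<^sub>W\<close> lies in \<open>J\<^sub>V\<close>, so
  restricting to \<open>J\<^sub>U \<times> J\<^sub>W\<close> commutes with the product \<open>X Y\<close>. Each of the nine identities is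
  of this form, with \<open>X\<close> and \<open>Y\<close> intertwining the matrices \<open>A\<close>, \<open>B\<close>, \<open>C\<close>.\<close>

lemma bij_betw_pick_finite:
  assumes "finite S"
  shows "bij_betw (pick S) {..<card S} S"
proof -
  have "inj_on (pick S) {..<card S}"
    by (rule strict_mono_on_imp_inj_on) (auto intro: strict_mono_onI pick_mono)
  moreover have "pick S ` {..<card S} \<subseteq> S"
    using pick_in_set by auto
  ultimately show ?thesis
    using assms by (simp add: bij_betw_def card_image card_subset_eq)
qed

lemma bij_betw_pick_below:
  "bij_betw (pick J) {..<card {j. j < b \<and> j \<in> J}} {j. j < b \<and> j \<in> J}"
proof -
  have "bij_betw (pick {j. j < b \<and> j \<in> J}) {..<card {j. j < b \<and> j \<in> J}} {j. j < b \<and> j \<in> J}"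
    by (rule bij_betw_pick_finite) simp
  then show ?thesis
    by (rule bij_betw_cong[THEN iffD1, rotated]) (simp add: pick_reduce_set)
qed

lemma pick_below:
  assumes "i < card {j. j < b \<and> j \<in> J}"
  shows "pick J i < b" "pick J i \<in> J"
  using bij_betw_apply[OF bij_betw_pick_below] assms by auto

lemma submatrix_mult:
  fixes X Y :: "'a :: semiring_0 mat"
  assumes X: "X \<in> carrier_mat a b" and Y: "Y \<in> carrier_mat b c"
    and support: "\<And>i j k. i < a \<Longrightarrow> i \<in> I \<Longrightarrow> k < c \<Longrightarrow> k \<in> K \<Longrightarrow> j < b \<Longrightarrow>
              X $$ (i, j) * Y $$ (j, k) \<noteq> 0 \<Longrightarrow> j \<in> J"
  shows "submatrix (X * Y) I K = submatrix X I J * submatrix Y J K"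
proof (rule eq_matI)
  define S where "S = {j. j < b \<and> j \<in> J}"
  fix i k
  assume "i < dim_row (submatrix X I J * submatrix Y J K)"
    and "k < dim_col (submatrix X I J * submatrix Y J K)"
  then have i: "i < card {i. i < a \<and> i \<in> I}" and k: "k < card {k. k < c \<and> k \<in> K}"
    using X Y by (simp_all add: dim_submatrix)
  define i' k' where "i' = pick I i" and "k' = pick K k"
  have i': "i' < a" "i' \<in> I" and k': "k' < c" "k' \<in> K"
    using pick_below i k unfolding i'_def k'_def by auto
  have "submatrix (X * Y) I K $$ (i, k) = (\<Sum>j<b. X $$ (i', j) * Y $$ (j, k'))"
    using i k i' k' X Y unfolding i'_def k'_def
    by (simp add: submatrix_index scalar_prod_def atLeast0LessThan)
  also have "\<dots> = (\<Sum>j\<in>S. X $$ (i', j) * Y $$ (j, k'))"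
    using support[OF i' k'] by (intro sum.mono_neutral_right) (auto simp: S_def)
  also have "\<dots> = (\<Sum>l<card S. X $$ (i', pick J l) * Y $$ (pick J l, k'))"
    using sum.reindex_bij_betw[OF bij_betw_pick_below, symmetric] by (simp add: S_def)
  also have "\<dots> = (submatrix X I J * submatrix Y J K) $$ (i, k)"
    using i k X Y unfolding i'_def k'_def S_def
    by (simp add: dim_submatrix submatrix_index scalar_prod_def atLeast0LessThan)
  finally show "submatrix (X * Y) I K $$ (i, k) = (submatrix X I J * submatrix Y J K) $$ (i, k)" .
qed (use X Y in \<open>simp_all add: dim_submatrix\<close>)

lemma power_mat_intertwine:
  fixes U X V :: "'a :: semiring_1 mat"
  assumes U: "U \<in> carrier_mat u u" and X: "X \<in> carrier_mat u v" and V: "V \<in> carrier_mat v v"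
    and intertwine: "U * X = X * V"
  shows "U ^\<^sub>m s * X = X * V ^\<^sub>m s"
proof (induction s)
  case 0
  then show ?case using U X V by simp
next
  case (Suc s)
  have "U ^\<^sub>m Suc s * X = U ^\<^sub>m s * (U * X)"
    using U X by (simp add: assoc_mult_mat[of _ u u _ u _ v])
  also have "\<dots> = (U ^\<^sub>m s * X) * V"
    using U X V intertwine by (simp add: assoc_mult_mat[of _ u u _ v _ v])
  also have "\<dots> = X * V ^\<^sub>m Suc s"
    using Suc U X V by (simp add: assoc_mult_mat[of _ u v _ v _ v])
  finally show ?case .
qed

lemma mult_mat_index_nonzero_iff:
  fixes X Y :: "nat mat"
  assumes "X \<in> carrier_mat a b" "Y \<in> carrier_mat b c" "i < a" "k < c"
  shows "(X * Y) $$ (i, k) \<noteq> 0 \<longleftrightarrow> (\<exists>j<b. X $$ (i, j) \<noteq> 0 \<and> Y $$ (j, k) \<noteq> 0)"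
  using assms by (auto simp: scalar_prod_def atLeast0LessThan)

lemma biinf_indices_power_col_nonzero:
  fixes U X V :: "nat mat"
  assumes U: "U \<in> carrier_mat u u" and X: "X \<in> carrier_mat u v" and V: "V \<in> carrier_mat v v"
    and intertwine: "U * X = X * V" and i: "i \<in> biinf_indices U"
    and j: "j < v" "X $$ (i, j) \<noteq> 0" and s: "s \<ge> 1"
  shows "\<exists>l<v. (V ^\<^sub>m s) $$ (l, j) \<noteq> 0"
proof -
  obtain h where h: "h < u" "(U ^\<^sub>m s) $$ (h, i) \<noteq> 0"
    using i s U unfolding biinf_indices_def by auto
  have "i < u" using i U unfolding biinf_indices_def by auto
  then have "(U ^\<^sub>m s * X) $$ (h, j) \<noteq> 0"
    using h j U X by (subst mult_mat_index_nonzero_iff) auto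
  then have "(X * V ^\<^sub>m s) $$ (h, j) \<noteq> 0"
    using power_mat_intertwine[OF U X V intertwine] by simp
  then show ?thesis
    using h j X V mult_mat_index_nonzero_iff[of X u v "V ^\<^sub>m s" v] by auto
qed

lemma biinf_indices_power_row_nonzero:
  fixes V Y W :: "nat mat"
  assumes V: "V \<in> carrier_mat v v" and Y: "Y \<in> carrier_mat v w" and W: "W \<in> carrier_mat w w"
    and intertwine: "V * Y = Y * W" and k: "k \<in> biinf_indices W"
    and j: "j < v" "Y $$ (j, k) \<noteq> 0" and s: "s \<ge> 1"
  shows "\<exists>l<v. (V ^\<^sub>m s) $$ (j, l) \<noteq> 0"
proof -
  obtain h where h: "h < w" "(W ^\<^sub>m s) $$ (k, h) \<noteq> 0"
    using k s W unfolding biinf_indices_def by auto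
  have "k < w" using k W unfolding biinf_indices_def by auto
  then have "(Y * W ^\<^sub>m s) $$ (j, h) \<noteq> 0"
    using h j Y W by (subst mult_mat_index_nonzero_iff) auto
  then have "(V ^\<^sub>m s * Y) $$ (j, h) \<noteq> 0"
    using power_mat_intertwine[OF V Y W intertwine] by simp
  then show ?thesis
    using h j V Y mult_mat_index_nonzero_iff[of "V ^\<^sub>m s" v v Y w] by auto
qed

lemma submatrix_mult_biinf_indices:
  fixes U V W X Y :: "nat mat"
  assumes U: "U \<in> carrier_mat u u" and V: "V \<in> carrier_mat v v" and W: "W \<in> carrier_mat w w"
    and X: "X \<in> carrier_mat u v" and Y: "Y \<in> carrier_mat v w"
    and UX: "U * X = X * V" and VY: "V * Y = Y * W"
  shows "submatrix (X * Y) (biinf_indices U) (biinf_indices W)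
       = submatrix X (biinf_indices U) (biinf_indices V) * submatrix Y (biinf_indices V) (biinf_indices W)"
proof (rule submatrix_mult[OF X Y])
  fix i j k
  assume "i \<in> biinf_indices U" "k \<in> biinf_indices W" "j < v" "X $$ (i, j) * Y $$ (j, k) \<noteq> 0"
  then show "j \<in> biinf_indices V"
    using V biinf_indices_power_col_nonzero[OF U X V UX] biinf_indices_power_row_nonzero[OF V Y W VY]
    unfolding biinf_indices_def by auto
qed

theorem mainTheorem14:
  fixes A B C R1 S1 R2 S2 R3 S3 :: "nat mat" and m n p :: nat
  assumes "A \<in> carrier_mat m m" "B \<in> carrier_mat n n" "C \<in> carrier_mat p p"
    and "R1 \<in> carrier_mat m n" "S1 \<in> carrier_mat n m"
    and "R2 \<in> carrier_mat n p" "S2 \<in> carrier_mat p n"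
    and "R3 \<in> carrier_mat m p" "S3 \<in> carrier_mat p m"
    and "A = R1 * S1" "B = S1 * R1"
    and "B = R2 * S2" "C = S2 * R2"
    and "A = R3 * S3" "C = S3 * R3"
    and "R1 * R2 = R3" "R2 * S3 = S1" "S3 * R1 = S2"
  shows
    "let JA = biinf_indices A; JB = biinf_indices B; JC = biinf_indices C;
         A' = submatrix A JA JA; B' = submatrix B JB JB; C' = submatrix C JC JC;
         R1' = submatrix R1 JA JB; S1' = submatrix S1 JB JA;
         R2' = submatrix R2 JB JC; S2' = submatrix S2 JC JB;
         R3' = submatrix R3 JA JC; S3' = submatrix S3 JC JA
     in A' = R1' * S1' \<and> B' = S1' * R1' \<and>
        B' = R2' * S2' \<and> C' = S2' * R2' \<and>
        A' = R3' * S3' \<and> C' = S3' * R3' \<and>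
        R1' * R2' = R3' \<and> R2' * S3' = S1' \<and> S3' * R1' = S2'"
proof -
  note c = assms(1-9)
  have AR1: "A * R1 = R1 * B" and BS1: "B * S1 = S1 * A"
    using c assms(10,11) by (simp_all add: assoc_mult_mat[of R1 m n S1 m] assoc_mult_mat[of S1 n m R1 n])
  have BR2: "B * R2 = R2 * C" and CS2: "C * S2 = S2 * B"
    using c assms(12,13) by (simp_all add: assoc_mult_mat[of R2 n p S2 n] assoc_mult_mat[of S2 p n R2 p])
  have AR3: "A * R3 = R3 * C" and CS3: "C * S3 = S3 * A"
    using c assms(14,15) by (simp_all add: assoc_mult_mat[of R3 m p S3 m] assoc_mult_mat[of S3 p m R3 p])
  note restrict = submatrix_mult_biinf_indices
  show ?thesis unfolding Let_def
    using restrict[OF c(1) c(2) c(1) c(4) c(5) AR1 BS1] restrict[OF c(2) c(1) c(2) c(5) c(4) BS1 AR1]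
      restrict[OF c(2) c(3) c(2) c(6) c(7) BR2 CS2] restrict[OF c(3) c(2) c(3) c(7) c(6) CS2 BR2]
      restrict[OF c(1) c(3) c(1) c(8) c(9) AR3 CS3] restrict[OF c(3) c(1) c(3) c(9) c(8) CS3 AR3]
      restrict[OF c(1) c(2) c(3) c(4) c(6) AR1 BR2] restrict[OF c(2) c(3) c(1) c(6) c(9) BR2 CS3]
      restrict[OF c(3) c(1) c(2) c(9) c(4) CS3 AR1]
      assms(10-18) by simp
qed

end
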